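(* Let $\gamma(t)=(t,t^2,t^3)$ be the moment curve in $\mathbb{R}^3$ and let $H_2,H_3\subset\mathbb{R}^3$ be two orthogonal affine planes. Then it is not possible that both $H_2$ and $H_3$ each contain at least three distinct points of $\{\gamma(t):t>0\}$.
   Context: Two affine planes are orthogonal if their normal vectors are orthogonal. *)

theory Defs
  imports "HOL-Analysis.Analysis"
begin

definition moment_curve :: "real \<Rightarrow> real^3" where
  "moment_curve t = vector [t, t^2, t^3]"

definition affine_plane :: "(real^3) set \<Rightarrow> bool" where
  "affine_plane H \<longleftrightarrow> (\<exists>n c. n \<noteq> 0 \<and> H = {x. n \<bullet> x = c})"

definition orthogonal_planes :: "(real^3) set \<Rightarrow> (real^3) set \<Rightarrow> bool" where
  "orthogonal_planes H1 H2 \<longleftrightarrow>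
     (\<exists>n1 c1 n2 c2. n1 \<noteq> 0 \<and> n2 \<noteq> 0 \<and> H1 = {x. n1 \<bullet> x = c1} \<and> H2 = {x. n2 \<bullet> x = c2}
        \<and> n1 \<bullet> n2 = 0)"

end

theory Submission
  imports Defs
begin

text \<open>If a plane \<open>n \<bullet> x = d\<close> meets the moment curve at \<open>a, b, c\<close>, then
  \<open>n\<^sub>3 t\<^sup>3 + n\<^sub>2 t\<^sup>2 + n\<^sub>1 t - d = n\<^sub>3 (t - a)(t - b)(t - c)\<close>, so by Vieta the normal is
  \<open>n\<^sub>3 (e\<^sub>2, -e\<^sub>1, 1)\<close> with \<open>e\<^sub>1, e\<^sub>2\<close> the elementary symmetric functions of \<open>a, b, c\<close>.
  For a second such plane with normal \<open>m\<^sub>3 (f\<^sub>2, -f\<^sub>1, 1)\<close> the inner product is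
  \<open>n\<^sub>3 m\<^sub>3 (e\<^sub>2 f\<^sub>2 + e\<^sub>1 f\<^sub>1 + 1)\<close>, which cannot vanish when all points are positive.\<close>

lemma inner_moment_curve: "n \<bullet> moment_curve t = n$1 * t + n$2 * t^2 + n$3 * t^3"
  unfolding moment_curve_def inner_vec_def by (simp add: sum_3 vector_3 mult.commute)

lemma cubic_coeffs_from_three_roots:
  fixes p q r d a b c :: "'a::idom"
  assumes "a \<noteq> b" "a \<noteq> c" "b \<noteq> c"
    and ea: "p*a + q*a^2 + r*a^3 = d" and eb: "p*b + q*b^2 + r*b^3 = d"
    and ec: "p*c + q*c^2 + r*c^3 = d"
  shows "q = - r*(a+b+c)" and "p = r*(a*b+b*c+c*a)"
proof -
  have "(a-b)*(p + q*(a+b) + r*(a^2+a*b+b^2)) = 0"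
    using ea eb by (simp add: algebra_simps power2_eq_square power3_eq_cube)
  then have ab: "p + q*(a+b) + r*(a^2+a*b+b^2) = 0" using assms by simp
  have "(a-c)*(p + q*(a+c) + r*(a^2+a*c+c^2)) = 0"
    using ea ec by (simp add: algebra_simps power2_eq_square power3_eq_cube)
  then have ac: "p + q*(a+c) + r*(a^2+a*c+c^2) = 0" using assms by simp
  have "(b-c)*(q + r*(a+b+c)) = (p + q*(a+b) + r*(a^2+a*b+b^2)) - (p + q*(a+c) + r*(a^2+a*c+c^2))"
    by (simp add: algebra_simps power2_eq_square)
  then have "(b-c)*(q + r*(a+b+c)) = 0" using ab ac by simp
  then show q: "q = - r*(a+b+c)" using assms by (simp add: eq_neg_iff_add_eq_0)
  show "p = r*(a*b+b*c+c*a)"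
    using ab q by (simp add: algebra_simps power2_eq_square)
qed

lemma normal_of_plane_through_moment_points:
  fixes n :: "real^3"
  assumes "a \<noteq> b" "a \<noteq> c" "b \<noteq> c"
    and "n \<bullet> moment_curve a = d" "n \<bullet> moment_curve b = d" "n \<bullet> moment_curve c = d"
  shows "n = n$3 *\<^sub>R vector [a*b+b*c+c*a, -(a+b+c), 1]"
proof -
  have "n$2 = - n$3*(a+b+c)" "n$1 = n$3*(a*b+b*c+c*a)"
    using cubic_coeffs_from_three_roots[of a b c "n$1" "n$2" "n$3" d] assms
    by (simp_all add: inner_moment_curve)
  then show ?thesis by (simp add: vec_eq_iff forall_3 vector_3 algebra_simps)
qed

lemma inner_Vieta_normals_pos:
  fixes a b c a' b' c' :: real
  assumes "0 < a" "0 < b" "0 < c" "0 < a'" "0 < b'" "0 < c'"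
  shows "vector [a*b+b*c+c*a, -(a+b+c), 1] \<bullet> (vector [a'*b'+b'*c'+c'*a', -(a'+b'+c'), 1] :: real^3) > 0"
proof -
  have "0 < (a*b+b*c+c*a) * (a'*b'+b'*c'+c'*a') + (a+b+c) * (a'+b'+c') + 1"
    using assms by (simp add: add_pos_pos mult_pos_pos)
  then show ?thesis by (simp add: inner_vec_def sum_3 vector_3 algebra_simps)
qed

lemma inner_normals_through_positive_moment_points_nonzero:
  fixes n m :: "real^3"
  assumes "n \<noteq> 0" "m \<noteq> 0"
    and "0 < a" "0 < b" "0 < c" "a \<noteq> b" "a \<noteq> c" "b \<noteq> c"
    and "n \<bullet> moment_curve a = d" "n \<bullet> moment_curve b = d" "n \<bullet> moment_curve c = d"
    and "0 < a'" "0 < b'" "0 < c'" "a' \<noteq> b'" "a' \<noteq> c'" "b' \<noteq> c'"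
    and "m \<bullet> moment_curve a' = d'" "m \<bullet> moment_curve b' = d'" "m \<bullet> moment_curve c' = d'"
  shows "n \<bullet> m \<noteq> 0"
proof -
  have n: "n = n$3 *\<^sub>R vector [a*b+b*c+c*a, -(a+b+c), 1]"
    using normal_of_plane_through_moment_points assms by blast
  have m: "m = m$3 *\<^sub>R vector [a'*b'+b'*c'+c'*a', -(a'+b'+c'), 1]"
    using normal_of_plane_through_moment_points assms by blast
  have "n$3 \<noteq> 0" "m$3 \<noteq> 0"
    using n m \<open>n \<noteq> 0\<close> \<open>m \<noteq> 0\<close> by (metis scale_zero_left)+
  moreover have "vector [a*b+b*c+c*a, -(a+b+c), 1] \<bullet>
      (vector [a'*b'+b'*c'+c'*a', -(a'+b'+c'), 1] :: real^3) \<noteq> 0"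
    using inner_Vieta_normals_pos assms by (metis less_irrefl)
  ultimately show ?thesis by (subst n, subst m) simp
qed

theorem mainTheorem4:
  fixes H2 H3 :: "(real^3) set"
  assumes "affine_plane H2" and "affine_plane H3"
    and "orthogonal_planes H2 H3"
  shows "\<not> ((\<exists>a b c. 0 < a \<and> 0 < b \<and> 0 < c \<and> a \<noteq> b \<and> a \<noteq> c \<and> b \<noteq> c \<and>
               moment_curve a \<in> H2 \<and> moment_curve b \<in> H2 \<and> moment_curve c \<in> H2) \<and>
             (\<exists>a b c. 0 < a \<and> 0 < b \<and> 0 < c \<and> a \<noteq> b \<and> a \<noteq> c \<and> b \<noteq> c \<and>
               moment_curve a \<in> H3 \<and> moment_curve b \<in> H3 \<and> moment_curve c \<in> H3))"
proof
  obtain n m d1 d2 where nm: "n \<noteq> 0" "m \<noteq> 0" "H2 = {x. n \<bullet> x = d1}" "H3 = {x. m \<bullet> x = d2}"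
    "n \<bullet> m = 0" using assms(3) unfolding orthogonal_planes_def by blast
  assume "(\<exists>a b c. 0 < a \<and> 0 < b \<and> 0 < c \<and> a \<noteq> b \<and> a \<noteq> c \<and> b \<noteq> c \<and>
               moment_curve a \<in> H2 \<and> moment_curve b \<in> H2 \<and> moment_curve c \<in> H2) \<and>
             (\<exists>a b c. 0 < a \<and> 0 < b \<and> 0 < c \<and> a \<noteq> b \<and> a \<noteq> c \<and> b \<noteq> c \<and>
               moment_curve a \<in> H3 \<and> moment_curve b \<in> H3 \<and> moment_curve c \<in> H3)"
  then obtain a b c a' b' c' where
    "0 < a" "0 < b" "0 < c" "a \<noteq> b" "a \<noteq> c" "b \<noteq> c"
    "n \<bullet> moment_curve a = d1" "n \<bullet> moment_curve b = d1" "n \<bullet> moment_curve c = d1"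
    "0 < a'" "0 < b'" "0 < c'" "a' \<noteq> b'" "a' \<noteq> c'" "b' \<noteq> c'"
    "m \<bullet> moment_curve a' = d2" "m \<bullet> moment_curve b' = d2" "m \<bullet> moment_curve c' = d2"
    using nm by auto
  then have "n \<bullet> m \<noteq> 0"
    using inner_normals_through_positive_moment_points_nonzero nm(1,2) by blast
  with nm(5) show False by contradiction
qed

end
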